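(* Consider an infinite execution $\gamma_0\gamma_1\ldots$ of the unison dynamics augmented with the infimum registers (as in the context), with $\gamma_0$ satisfying $WU_0$, in which every process increments its clock infinitely often; let $\bot_0$, $\widetilde{p^t.r}$ and $t_{p,k}$ be as in the context. Let $U$ be an integer with $U\delta\ge\bot_0+D+1$, and let $k\in\{1,\dots,\varrho\}$. Then for every $p\in V$, in the configuration $\gamma_{t_{p,U\delta+k}}$, $p.v_1=\bigoplus\{q.v_0: q\in V(p,k-1)\}$ and $p.v_2=\bigoplus\{q.v_0: q\in V(p,k)\}$.
   Context: Let $G=(V,E)$ be a finite connected undirected graph, $|V|=n\ge 2$, $\mathcal N_p$ the set of neighbors of $p$, $d(p,q)$ the hop distance, $D$ the diameter, and $V(p,r)=\{q\in V: d(p,q)\le r\}$. Fix integers $\varrho\ge1$, $\delta=\varrho+1$, and $M\ge3$ a multiple of $\delta$; for an integer $a$, $\bar a\in\{0,\dots,M-1\}$ is its residue modulo $M$. Each process $p$ holds a clock $p.r\in\{0,\dots,M-1\}$; $p^t.r$ is its value in $\gamma_t$. Integers $a,b$ are locally comparable if $\min(\overline{a-b},\overline{b-a})\le1$, and then $b\ominus a=\overline{b-a}$ if $\overline{b-a}\le1$, else $-\overline{a-b}$. $WU$: for every edge $\{p,q\}$, $p.r,q.r$ are locally comparable. The delay of a path $p_0\ldots p_k$ is $\sum_{i<k}(p_{i+1}.r\ominus p_i.r)$. $WU_0$: $WU$ holds and all paths between any $p,q$ have the same delay $\delta_{(p,q)}$ ($\delta^t_{(p,q)}$ in $\gamma_t$).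 Let $\oplus$ be an associative, commutative, idempotent binary operation on a set $\mathbb S$; $\bigoplus$ of a finite nonempty set is the $\oplus$ of its elements. Each process $p$ has registers $p.v_0,p.v_1,p.v_2\in\mathbb S$, where $p.v_0$ is never modified. Dynamics: $p$ is enabled iff for every $q\in\mathcal N_p$, $q.r=p.r$ or $q.r=\overline{p.r+1}$. In a transition $\gamma_t\to\gamma_{t+1}$ a nonempty set of processes enabled in $\gamma_t$ is chosen (by an arbitrary daemon); each chosen $p$, reading the values of $\gamma_t$, does: if $p.r\equiv\varrho \pmod\delta$ then $p.v_1:=p.v_0$, $p.v_2:=p.v_0$; otherwise $p.v_1:=p.v_2$ and $p.v_2:=p.v_0\oplus\bigoplus\{q.v_{\omega(q)}:q\in\mathcal N_p\}$, where $\omega(q)=2$ if $q.r=p.r$ and $\omega(q)=1$ if $q.r=\overline{p.r+1}$; then $p.r:=\overline{p.r+1}$. Other processes are unchanged. Lifting: choose $p_0$ with $\delta^0_{(p_0,q)}\ge0$ for all $q$, let $\bot_0=p_0^0.r$, set $\widetilde{p^0.r}=\bot_0+\delta^0_{(p_0,p)}$, and $\widetilde{p^{t+1}.r}=\widetilde{p^t.r}+1$ if $p$ increments in $\gamma_t\to\gamma_{t+1}$, else $\widetilde{p^{t+1}.r}=\widetilde{p^t.r}$. For an integer $k$, $t_{p,k}$ is the smallest $t$ with $\widetilde{p^t.r}=k$. *)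

theory Defs
  imports Main
begin

definition graph_ok :: "'a set \<Rightarrow> ('a \<Rightarrow> 'a \<Rightarrow> bool) \<Rightarrow> bool" where
  "graph_ok V E \<longleftrightarrow> finite V \<and> card V \<ge> 2 \<and>
     (\<forall>p q. E p q \<longrightarrow> p \<in> V \<and> q \<in> V) \<and> (\<forall>p q. E p q \<longrightarrow> E q p) \<and> (\<forall>p. \<not> E p p)"

definition nbrs :: "'a set \<Rightarrow> ('a \<Rightarrow> 'a \<Rightarrow> bool) \<Rightarrow> 'a \<Rightarrow> 'a set" where
  "nbrs V E p = {q \<in> V. E p q}"

definition is_path :: "'a set \<Rightarrow> ('a \<Rightarrow> 'a \<Rightarrow> bool) \<Rightarrow> 'a \<Rightarrow> 'a \<Rightarrow> 'a list \<Rightarrow> bool" where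
  "is_path V E p q xs \<longleftrightarrow> xs \<noteq> [] \<and> hd xs = p \<and> last xs = q \<and> set xs \<subseteq> V \<and> successively E xs"

definition connected_graph :: "'a set \<Rightarrow> ('a \<Rightarrow> 'a \<Rightarrow> bool) \<Rightarrow> bool" where
  "connected_graph V E \<longleftrightarrow> (\<forall>p\<in>V. \<forall>q\<in>V. \<exists>xs. is_path V E p q xs)"

definition hop_dist :: "'a set \<Rightarrow> ('a \<Rightarrow> 'a \<Rightarrow> bool) \<Rightarrow> 'a \<Rightarrow> 'a \<Rightarrow> nat" where
  "hop_dist V E p q = (LEAST k. \<exists>xs. is_path V E p q xs \<and> length xs = k + 1)"

definition diameter :: "'a set \<Rightarrow> ('a \<Rightarrow> 'a \<Rightarrow> bool) \<Rightarrow> nat" where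
  "diameter V E = Max {hop_dist V E p q | p q. p \<in> V \<and> q \<in> V}"

definition ball :: "'a set \<Rightarrow> ('a \<Rightarrow> 'a \<Rightarrow> bool) \<Rightarrow> 'a \<Rightarrow> nat \<Rightarrow> 'a set" where
  "ball V E p r = {q \<in> V. hop_dist V E p q \<le> r}"

definition loc_comp :: "int \<Rightarrow> int \<Rightarrow> int \<Rightarrow> bool" where
  "loc_comp M a b \<longleftrightarrow> min ((a - b) mod M) ((b - a) mod M) \<le> 1"

definition ominus :: "int \<Rightarrow> int \<Rightarrow> int \<Rightarrow> int" where
  "ominus M b a = (if (b - a) mod M \<le> 1 then (b - a) mod M else - ((a - b) mod M))"

definition delay :: "int \<Rightarrow> ('a \<Rightarrow> int) \<Rightarrow> 'a list \<Rightarrow> int" where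
  "delay M r xs = sum_list (map (\<lambda>(a, b). ominus M (r b) (r a)) (zip xs (tl xs)))"

definition WU :: "int \<Rightarrow> ('a \<Rightarrow> 'a \<Rightarrow> bool) \<Rightarrow> ('a \<Rightarrow> int) \<Rightarrow> bool" where
  "WU M E r \<longleftrightarrow> (\<forall>p q. E p q \<longrightarrow> loc_comp M (r p) (r q))"

definition WU0 :: "int \<Rightarrow> 'a set \<Rightarrow> ('a \<Rightarrow> 'a \<Rightarrow> bool) \<Rightarrow> ('a \<Rightarrow> int) \<Rightarrow> bool" where
  "WU0 M V E r \<longleftrightarrow> WU M E r \<and>
     (\<forall>p\<in>V. \<forall>q\<in>V. \<forall>xs ys. is_path V E p q xs \<longrightarrow> is_path V E p q ys \<longrightarrow> delay M r xs = delay M r ys)"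

(* the common delay \<delta>_(p,q) (meaningful under WU0) *)
definition pdelay :: "int \<Rightarrow> 'a set \<Rightarrow> ('a \<Rightarrow> 'a \<Rightarrow> bool) \<Rightarrow> ('a \<Rightarrow> int) \<Rightarrow> 'a \<Rightarrow> 'a \<Rightarrow> int" where
  "pdelay M V E r p q = delay M r (SOME xs. is_path V E p q xs)"

(* \<Oplus> of a finite nonempty set, for an associative commutative idempotent operation *)
definition bigop :: "('s \<Rightarrow> 's \<Rightarrow> 's) \<Rightarrow> 's set \<Rightarrow> 's" where
  "bigop f A = semilattice_set.F f A"

definition enabled :: "int \<Rightarrow> 'a set \<Rightarrow> ('a \<Rightarrow> 'a \<Rightarrow> bool) \<Rightarrow> ('a \<Rightarrow> int) \<Rightarrow> 'a \<Rightarrow> bool" where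
  "enabled M V E r p \<longleftrightarrow> (\<forall>q \<in> nbrs V E p. r q = r p \<or> r q = (r p + 1) mod M)"

definition step ::
  "int \<Rightarrow> int \<Rightarrow> 'a set \<Rightarrow> ('a \<Rightarrow> 'a \<Rightarrow> bool) \<Rightarrow> ('s \<Rightarrow> 's \<Rightarrow> 's) \<Rightarrow> ('a \<Rightarrow> 's)
   \<Rightarrow> ('a \<Rightarrow> int) \<Rightarrow> ('a \<Rightarrow> 's) \<Rightarrow> ('a \<Rightarrow> 's) \<Rightarrow> 'a set
   \<Rightarrow> ('a \<Rightarrow> int) \<Rightarrow> ('a \<Rightarrow> 's) \<Rightarrow> ('a \<Rightarrow> 's) \<Rightarrow> bool" where
  "step M rho V E f v0 r v1 v2 S r' v1' v2' \<longleftrightarrow>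
     S \<noteq> {} \<and> S \<subseteq> V \<and> (\<forall>p\<in>S. enabled M V E r p) \<and>
     (\<forall>p. if p \<in> S then
            r' p = (r p + 1) mod M \<and>
            (if r p mod (rho + 1) = rho
             then v1' p = v0 p \<and> v2' p = v0 p
             else v1' p = v2 p \<and>
                  v2' p = f (v0 p) (bigop f ((\<lambda>q. if r q = r p then v2 q else v1 q) ` nbrs V E p)))
          else r' p = r p \<and> v1' p = v1 p \<and> v2' p = v2 p)"

primrec lifted :: "('a \<Rightarrow> int) \<Rightarrow> (nat \<Rightarrow> 'a set) \<Rightarrow> nat \<Rightarrow> 'a \<Rightarrow> int" where
  "lifted init act 0 p = init p"
| "lifted init act (Suc t) p = lifted init act t p + (if p \<in> act t then 1 else 0)"

definition first_time :: "('a \<Rightarrow> int) \<Rightarrow> (nat \<Rightarrow> 'a set) \<Rightarrow> 'a \<Rightarrow> int \<Rightarrow> nat" where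
  "first_time init act p k = (LEAST t. lifted init act t p = k)"

end

theory Submission
  imports Defs
begin

(* The argument lifts the clocks, which live in Z/MZ, to unbounded integer clocks.
   (1) Under WU0 the initial lifting init q = r0(p0) + delay(p0,q) is congruent to the
       clock of q modulo M, differs by at most one between neighbours, and is at most
       r0(p0) + D (delays are bounded by path lengths).
   (2) These two properties are invariant along the execution; combined with the
       enabledness condition they show that an active process only sees neighbours whose
       lifted clock equals its own or exceeds it by one (locale unison_run).
   (3) Fix a multiple W of rho + 1 above every initial lifted clock.  By induction on time,
       a process whose lifted clock lies in [W, W + rho] holds in v2 the join of v0 over
       the ball of radius (clock - W) and in v1 the join over the radius one smaller: at
       clock W - 1 the registers are reset to v0, and each further increment joins the
       current layer of the neighbours, which by (2) are in the right phase.
   (4) With fairness the lifted clock of p reaches W + k, so at t_{p,W+k} the claim is (3). *)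

lemma delay_singleton [simp]: "delay M r [x] = 0"
  by (simp add: delay_def)

lemma delay_Cons_Cons: "delay M r (x # y # xs) = ominus M (r y) (r x) + delay M r (y # xs)"
  by (simp add: delay_def)

lemma delay_snoc:
  "xs \<noteq> [] \<Longrightarrow> delay M r (xs @ [b]) = delay M r xs + ominus M (r b) (r (last xs))"
proof (induction xs)
  case (Cons x xs)
  then show ?case by (cases xs) (simp_all add: delay_Cons_Cons)
qed simp

lemma ominus_mod: "ominus M b a mod M = (b - a) mod M"
proof -
  have "(- ((a - b) mod M)) mod M = (b - a) mod M"
    by (metis minus_diff_eq mod_minus_eq)
  then show ?thesis by (simp add: ominus_def)
qed

lemma ominus_le_1:
  assumes "M > 0" shows "ominus M b a \<le> 1"
proof -
  have "0 \<le> (a - b) mod M" using assms by simp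
  then show ?thesis unfolding ominus_def by auto
qed

lemma ominus_ge_minus_1:
  assumes "M > 0" "loc_comp M a b"
  shows "ominus M b a \<ge> -1"
proof -
  have "0 \<le> (a - b) mod M" "0 \<le> (b - a) mod M" using pos_mod_sign assms(1) by blast+
  moreover have "(a - b) mod M \<le> 1 \<or> (b - a) mod M \<le> 1"
    using assms(2) unfolding loc_comp_def by linarith
  ultimately show ?thesis unfolding ominus_def by auto
qed

(* The delay of a path telescopes modulo M. *)
lemma delay_mod: "xs \<noteq> [] \<Longrightarrow> delay M r xs mod M = (r (last xs) - r (hd xs)) mod M"
proof (induction xs)
  case (Cons x xs)
  show ?case
  proof (cases xs)
    case (Cons y ys)
    then have "delay M r (x # xs) mod M
        = (ominus M (r y) (r x) mod M + delay M r xs mod M) mod M"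
      by (simp add: delay_Cons_Cons mod_add_eq)
    also have "\<dots> = ((r y - r x) mod M + (r (last xs) - r y) mod M) mod M"
      using Cons.IH Cons by (simp add: ominus_mod)
    also have "\<dots> = (r (last (x # xs)) - r (hd (x # xs))) mod M"
      using Cons by (simp add: mod_add_eq)
    finally show ?thesis .
  qed simp
qed simp

(* Each edge contributes at most one to a delay. *)
lemma delay_le_length: "M > 0 \<Longrightarrow> xs \<noteq> [] \<Longrightarrow> delay M r xs \<le> int (length xs) - 1"
proof (induction xs)
  case (Cons x xs)
  then show ?case
    using ominus_le_1[of M "r (hd xs)" "r x"]
    by (cases xs) (simp_all add: delay_Cons_Cons)
qed simp

section \<open>Paths, hop distance and balls\<close>

lemma is_path_snoc: "is_path V E p a xs \<Longrightarrow> E a b \<Longrightarrow> b \<in> V \<Longrightarrow> is_path V E p b (xs @ [b])"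
  by (auto simp: is_path_def successively_append_iff)

lemma hop_dist_le_iff:
  assumes "\<exists>xs. is_path V E p q xs"
  shows "hop_dist V E p q \<le> m \<longleftrightarrow> (\<exists>xs. is_path V E p q xs \<and> length xs \<le> m + 1)"
proof
  assume h: "hop_dist V E p q \<le> m"
  from assms obtain xs where xs: "is_path V E p q xs" by blast
  then have "\<exists>k xs. is_path V E p q xs \<and> length xs = k + 1"
    by (intro exI[of _ "length xs - 1"] exI[of _ xs]) (auto simp: is_path_def)
  then have "\<exists>ys. is_path V E p q ys \<and> length ys = hop_dist V E p q + 1"
    unfolding hop_dist_def by (rule LeastI_ex)
  then show "\<exists>xs. is_path V E p q xs \<and> length xs \<le> m + 1" using h by auto
next
  assume "\<exists>xs. is_path V E p q xs \<and> length xs \<le> m + 1"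
  then obtain xs where xs: "is_path V E p q xs" "length xs \<le> m + 1" by blast
  then have "hop_dist V E p q \<le> length xs - 1"
    unfolding hop_dist_def by (intro Least_le) (auto simp: is_path_def)
  then show "hop_dist V E p q \<le> m" using xs by auto
qed

lemma mem_ball_iff:
  assumes "connected_graph V E" "a \<in> V" "b \<in> V"
  shows "b \<in> ball V E a n \<longleftrightarrow> (\<exists>xs. is_path V E a b xs \<and> length xs \<le> n + 1)"
  using hop_dist_le_iff[of V E a b n] assms unfolding ball_def connected_graph_def by blast

lemma ball_subset: "ball V E a n \<subseteq> V"
  unfolding ball_def by blast

lemma ball_zero:
  assumes conn: "connected_graph V E" and p: "p \<in> V"
  shows "ball V E p 0 = {p}"
proof -
  have "q \<in> ball V E p 0 \<longleftrightarrow> q = p" if q: "q \<in> V" for q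
  proof -
    have "(\<exists>xs. is_path V E p q xs \<and> length xs \<le> 1) \<longleftrightarrow> q = p"
    proof
      assume "\<exists>xs. is_path V E p q xs \<and> length xs \<le> 1"
      then obtain xs where "is_path V E p q xs" "length xs \<le> 1" by blast
      then show "q = p" by (cases xs) (auto simp: is_path_def)
    next
      assume "q = p"
      then show "\<exists>xs. is_path V E p q xs \<and> length xs \<le> 1"
        using p by (intro exI[of _ "[p]"]) (simp add: is_path_def)
    qed
    then show ?thesis using mem_ball_iff[OF conn p q, of 0] by simp
  qed
  then show ?thesis using ball_subset[of V E p 0] p by blast
qed

lemma centre_in_ball:
  assumes "connected_graph V E" "a \<in> V" shows "a \<in> ball V E a n"
proof -
  have "hop_dist V E a a \<le> 0" using ball_zero[OF assms] unfolding ball_def by blast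
  then show ?thesis using assms(2) unfolding ball_def by simp
qed

lemma ball_Suc:
  assumes conn: "connected_graph V E" and p: "p \<in> V"
  shows "ball V E p (Suc m) = insert p (\<Union>q\<in>nbrs V E p. ball V E q m)"
proof (intro equalityI subsetI)
  fix x assume x: "x \<in> ball V E p (Suc m)"
  then have xV: "x \<in> V" by (rule subsetD[OF ball_subset])
  then obtain xs where xs: "is_path V E p x xs" "length xs \<le> Suc m + 1"
    using mem_ball_iff[OF conn p xV] x by blast
  have ne: "xs \<noteq> []" and hd: "hd xs = p" and lx: "last xs = x" and sV: "set xs \<subseteq> V"
    and sx: "successively E xs" using xs(1) unfolding is_path_def by blast+
  define ys where "ys = tl xs"
  have xs_eq: "xs = p # ys" unfolding ys_def using ne hd by (metis list.collapse)
  show "x \<in> insert p (\<Union>q\<in>nbrs V E p. ball V E q m)"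
  proof (cases "ys = []")
    case True
    then show ?thesis using lx xs_eq by simp
  next
    case False
    have E: "E p (hd ys)" and sy: "successively E ys"
      using sx False unfolding xs_eq successively_Cons by blast+
    have hdV: "hd ys \<in> V" using sV hd_in_set[OF False] unfolding xs_eq by auto
    have "last ys = x" "set ys \<subseteq> V" using lx sV False unfolding xs_eq by auto
    then have "is_path V E (hd ys) x ys" using False sy unfolding is_path_def by blast
    moreover have "length ys \<le> m + 1" using xs(2) unfolding xs_eq by simp
    ultimately have "x \<in> ball V E (hd ys) m" using mem_ball_iff[OF conn hdV xV] by blast
    moreover have "hd ys \<in> nbrs V E p" using E hdV unfolding nbrs_def by blast
    ultimately show ?thesis by blast
  qed
next
  fix x assume x: "x \<in> insert p (\<Union>q\<in>nbrs V E p. ball V E q m)"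
  show "x \<in> ball V E p (Suc m)"
  proof (cases "x = p")
    case True then show ?thesis using centre_in_ball[OF conn p] by blast
  next
    case False
    then obtain q where q: "q \<in> V" "E p q" "x \<in> ball V E q m"
      using x unfolding nbrs_def by blast
    have xV: "x \<in> V" using q(3) by (rule subsetD[OF ball_subset])
    obtain ys where ys: "is_path V E q x ys" "length ys \<le> m + 1"
      using mem_ball_iff[OF conn q(1) xV] q(3) by blast
    then have "ys \<noteq> []" "hd ys = q" "last ys = x" "set ys \<subseteq> V" "successively E ys"
      unfolding is_path_def by auto
    then have "is_path V E p x (p # ys)"
      using q(2) p unfolding is_path_def successively_Cons by auto
    moreover have "length (p # ys) \<le> Suc m + 1" using ys(2) by simp
    ultimately show ?thesis using mem_ball_iff[OF conn p xV] by blast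
  qed
qed

lemma nbrs_nonempty:
  assumes graph: "graph_ok V E" and conn: "connected_graph V E" and p: "p \<in> V"
  shows "nbrs V E p \<noteq> {}"
proof -
  have "\<not> V \<subseteq> {p}"
    using graph card_mono[of "{p}" V] unfolding graph_ok_def by auto
  then obtain q where q: "q \<in> V" "q \<noteq> p" by blast
  obtain xs where xs: "is_path V E p q xs"
    using conn p q unfolding connected_graph_def by blast
  then obtain ys where ys: "xs = p # ys"
    by (cases xs) (auto simp: is_path_def)
  have "ys \<noteq> []" using xs ys q(2) by (auto simp: is_path_def)
  then have "hd ys \<in> nbrs V E p"
    using xs unfolding ys is_path_def nbrs_def successively_Cons by auto
  then show ?thesis by blast
qed

lemma hop_dist_le_diameter:
  assumes "finite V" "p \<in> V" "q \<in> V"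
  shows "hop_dist V E p q \<le> diameter V E"
proof -
  have "finite {hop_dist V E a b |a b. a \<in> V \<and> b \<in> V}"
    using finite_image_set2[of "\<lambda>a. a \<in> V" "\<lambda>b. b \<in> V" "hop_dist V E"] assms(1) by simp
  then show ?thesis unfolding diameter_def using assms(2,3) by (auto intro: Max_ge)
qed

section \<open>The initial lifting of the clocks\<close>

lemma pdelay_path:
  assumes "connected_graph V E" "p \<in> V" "q \<in> V"
  shows "is_path V E p q (SOME xs. is_path V E p q xs)"
proof -
  have "\<exists>xs. is_path V E p q xs" using assms unfolding connected_graph_def by blast
  then show ?thesis by (rule someI_ex)
qed

lemma pdelay_mod:
  assumes "connected_graph V E" "p \<in> V" "q \<in> V"
  shows "pdelay M V E r p q mod M = (r q - r p) mod M"
proof -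
  let ?P = "SOME xs. is_path V E p q xs"
  have "?P \<noteq> []" "hd ?P = p" "last ?P = q"
    using pdelay_path[OF assms] unfolding is_path_def by auto
  then show ?thesis unfolding pdelay_def using delay_mod[of ?P M r] by simp
qed

lemma pdelay_eq_delay:
  assumes WU0: "WU0 M V E r" and conn: "connected_graph V E"
    and pq: "p \<in> V" "q \<in> V" and xs: "is_path V E p q xs"
  shows "pdelay M V E r p q = delay M r xs"
proof -
  have "is_path V E p q (SOME xs. is_path V E p q xs)" by (rule pdelay_path[OF conn pq])
  with xs have "delay M r (SOME xs. is_path V E p q xs) = delay M r xs"
    using WU0 pq unfolding WU0_def by blast
  then show ?thesis unfolding pdelay_def .
qed

lemma pdelay_edge:
  assumes WU0: "WU0 M V E r" and conn: "connected_graph V E"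
    and p: "p \<in> V" and ab: "E a b" "a \<in> V" "b \<in> V"
  shows "pdelay M V E r p b = pdelay M V E r p a + ominus M (r b) (r a)"
proof -
  define P where "P = (SOME xs. is_path V E p a xs)"
  have P: "is_path V E p a P" unfolding P_def by (rule pdelay_path[OF conn p ab(2)])
  then have "is_path V E p b (P @ [b])" using ab(1,3) by (rule is_path_snoc)
  then have "pdelay M V E r p b = delay M r (P @ [b])"
    by (rule pdelay_eq_delay[OF WU0 conn p ab(3)])
  also have "\<dots> = delay M r P + ominus M (r b) (r a)"
    using P delay_snoc[of P M r b] unfolding is_path_def by simp
  finally show ?thesis unfolding pdelay_def P_def .
qed

(* A delay is bounded by the length of a shortest path, hence by the diameter. *)
lemma pdelay_le_diameter:
  assumes "M > 0" and WU0: "WU0 M V E r" and conn: "connected_graph V E"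
    and "finite V" and pq: "p \<in> V" "q \<in> V"
  shows "pdelay M V E r p q \<le> int (diameter V E)"
proof -
  have "\<exists>xs. is_path V E p q xs" using conn pq unfolding connected_graph_def by blast
  then obtain ys where ys: "is_path V E p q ys" "length ys \<le> hop_dist V E p q + 1"
    using hop_dist_le_iff[of V E p q "hop_dist V E p q"] by blast
  have "pdelay M V E r p q = delay M r ys" by (rule pdelay_eq_delay[OF WU0 conn pq ys(1)])
  also have "\<dots> \<le> int (length ys) - 1"
    using delay_le_length[OF assms(1)] ys(1) unfolding is_path_def by blast
  also have "\<dots> \<le> int (diameter V E)"
    using ys(2) hop_dist_le_diameter[OF assms(4) pq, of E] by linarith
  finally show ?thesis .
qed

section \<open>Joins over balls\<close>

(* The value v2 should hold after j accumulation rounds: the join of v0 over V(q, j). *)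
definition ball_join :: "'a set \<Rightarrow> ('a \<Rightarrow> 'a \<Rightarrow> bool) \<Rightarrow> ('s \<Rightarrow> 's \<Rightarrow> 's) \<Rightarrow> ('a \<Rightarrow> 's)
    \<Rightarrow> 'a \<Rightarrow> nat \<Rightarrow> 's" where
  "ball_join V E f v0 q j = bigop f (v0 ` ball V E q j)"

lemma bigop_UN:
  assumes semi: "semilattice f" and "finite I" "I \<noteq> {}" "\<forall>i\<in>I. finite (A i) \<and> A i \<noteq> {}"
  shows "bigop f (g ` (\<Union>i\<in>I. A i)) = bigop f ((\<lambda>i. bigop f (g ` A i)) ` I)"
  using assms(2,3,4)
proof (induction I rule: finite_ne_induct)
  case (singleton x)
  then show ?case
    using semilattice_set.singleton[of f] semi by (simp add: bigop_def semilattice_set_def)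
next
  case (insert x F)
  interpret S: semilattice_set f using semi by (simp add: semilattice_set_def)
  have "bigop f (g ` (\<Union>i\<in>insert x F. A i)) = f (bigop f (g ` A x)) (bigop f (g ` (\<Union>i\<in>F. A i)))"
    unfolding bigop_def using insert by (simp add: image_Un S.union)
  then show ?case using insert by (simp add: bigop_def)
qed

lemma ball_join_0:
  "semilattice f \<Longrightarrow> connected_graph V E \<Longrightarrow> q \<in> V \<Longrightarrow> ball_join V E f v0 q 0 = v0 q"
  using ball_zero[of V E q] semilattice_set.singleton[of f]
  by (simp add: ball_join_def bigop_def semilattice_set_def)

(* The join over a ball of radius m + 1 is v0 p joined with the neighbours' joins
   over radius m: the recurrence computed by the register v2. *)
lemma ball_join_Suc:
  assumes semi: "semilattice f" and graph: "graph_ok V E" and conn: "connected_graph V E"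
    and p: "p \<in> V"
  shows "ball_join V E f v0 p (Suc m)
       = f (v0 p) (bigop f ((\<lambda>q. ball_join V E f v0 q m) ` nbrs V E p))"
proof -
  interpret S: semilattice_set f using semi by (simp add: semilattice_set_def)
  have finV: "finite V" using graph by (simp add: graph_ok_def)
  have fin_nbrs: "finite (nbrs V E p)" using finV by (simp add: nbrs_def)
  have balls: "\<forall>q\<in>nbrs V E p. finite (ball V E q m) \<and> ball V E q m \<noteq> {}"
    using centre_in_ball[OF conn] finite_subset[OF ball_subset finV]
    unfolding nbrs_def by blast
  note ne = nbrs_nonempty[OF graph conn p]
  have "ball_join V E f v0 p (Suc m) = f (v0 p) (bigop f (v0 ` (\<Union>q\<in>nbrs V E p. ball V E q m)))"
    unfolding ball_join_def bigop_def ball_Suc[OF conn p] using balls fin_nbrs ne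
    by (simp add: S.insert)
  then show ?thesis
    using bigop_UN[OF semi fin_nbrs ne balls] by (simp add: ball_join_def)
qed

lemma step_parts:
  assumes "step M rho V E f v0 r v1 v2 S r' v1' v2'"
  shows "S \<subseteq> V" "\<forall>p\<in>S. enabled M V E r p"
    "\<And>p. p \<notin> S \<Longrightarrow> r' p = r p \<and> v1' p = v1 p \<and> v2' p = v2 p"
    "\<And>p. p \<in> S \<Longrightarrow> r' p = (r p + 1) mod M"
    "\<And>p. p \<in> S \<Longrightarrow> r p mod (rho + 1) = rho \<Longrightarrow> v1' p = v0 p \<and> v2' p = v0 p"
    "\<And>p. p \<in> S \<Longrightarrow> r p mod (rho + 1) \<noteq> rho \<Longrightarrow> v1' p = v2 p \<and>
        v2' p = f (v0 p) (bigop f ((\<lambda>q. if r q = r p then v2 q else v1 q) ` nbrs V E p))"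
proof -
  note h = assms[unfolded step_def]
  show "S \<subseteq> V" "\<forall>p\<in>S. enabled M V E r p" using h by blast+
  note upd = h[THEN conjunct2, THEN conjunct2, THEN conjunct2, rule_format]
  fix p
  show "p \<notin> S \<Longrightarrow> r' p = r p \<and> v1' p = v1 p \<and> v2' p = v2 p"
    and "p \<in> S \<Longrightarrow> r' p = (r p + 1) mod M"
    and "p \<in> S \<Longrightarrow> r p mod (rho + 1) = rho \<Longrightarrow> v1' p = v0 p \<and> v2' p = v0 p"
    and "p \<in> S \<Longrightarrow> r p mod (rho + 1) \<noteq> rho \<Longrightarrow> v1' p = v2 p \<and>
        v2' p = f (v0 p) (bigop f ((\<lambda>q. if r q = r p then v2 q else v1 q) ` nbrs V E p))"
    using upd[of p] by simp_all
qed

lemma consecutive_of_mod: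
  fixes x y M :: int
  assumes M: "M \<ge> 3" and d: "\<bar>y - x\<bar> \<le> 1"
    and e: "y mod M = x mod M \<or> y mod M = (x mod M + 1) mod M"
  shows "y = x \<or> y = x + 1"
proof (rule ccontr)
  assume "\<not> ?thesis"
  then have y: "y = x - 1" using d by linarith
  have "M dvd 1 \<or> M dvd 2"
  proof (cases "y mod M = x mod M")
    case True
    then have "M dvd y - x" by (simp add: mod_eq_dvd_iff)
    moreover have "y - x = - 1" using y by simp
    ultimately show ?thesis by simp
  next
    case False
    then have "(x + 1) mod M = y mod M" using e by (simp add: mod_add_left_eq)
    then have "M dvd (x + 1) - y" by (simp add: mod_eq_dvd_iff)
    moreover have "(x + 1) - y = 2" using y by simp
    ultimately show ?thesis by simp
  qed
  then show False using M zdvd_imp_le[of M 1] zdvd_imp_le[of M 2] by auto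
qed

lemma mod_Suc_neq:
  fixes x M :: int
  assumes "M \<ge> 3"
  shows "(x + 1) mod M \<noteq> x mod M"
proof
  assume "(x + 1) mod M = x mod M"
  then have "M dvd 1" using mod_eq_dvd_iff[of "x + 1" M x] by simp
  then show False using assms zdvd_imp_le[of M 1] by simp
qed

lemma mod_add_multiple:
  fixes W a b :: int
  assumes "b dvd W"
  shows "(W + a) mod b = a mod b"
proof -
  obtain c where "W = b * c" using assms by (rule dvdE)
  then show ?thesis by (simp add: add.commute)
qed

lemma lifted_mono: "t \<le> t' \<Longrightarrow> lifted init act t p \<le> lifted init act t' p"
  by (induction t' rule: dec_induct) simp_all

lemma lifted_unbounded:
  assumes fair: "\<forall>t. \<exists>t'\<ge>t. p \<in> act t'"
  shows "\<exists>t. init p + int n \<le> lifted init act t p"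
proof (induction n)
  case (Suc n)
  then obtain t where t: "init p + int n \<le> lifted init act t p" by blast
  obtain t' where t': "t \<le> t'" "p \<in> act t'" using fair by blast
  then have "init p + int (Suc n) \<le> lifted init act (Suc t') p"
    using t lifted_mono[OF t'(1), of init act p] by simp
  then show ?case by blast
qed (auto intro: exI[of _ 0])

(* Since a lifted clock increases by at most one per step, a fair process passes
   through every value above its initial one; t_{p,c} is thus well defined. *)
lemma lifted_first_time:
  assumes fair: "\<forall>t. \<exists>t'\<ge>t. p \<in> act t'" and c: "init p \<le> c"
  shows "lifted init act (first_time init act p c) p = c"
proof -
  define t0 where "t0 = (LEAST t. c \<le> lifted init act t p)"
  have "\<exists>t. c \<le> lifted init act t p"
    using lifted_unbounded[OF fair, of init "nat (c - init p)"] c by auto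
  then have t0: "c \<le> lifted init act t0 p" unfolding t0_def by (rule LeastI_ex)
  have "lifted init act t0 p = c"
  proof (cases t0)
    case 0 then show ?thesis using t0 c by simp
  next
    case (Suc s)
    then have "\<not> c \<le> lifted init act s p"
      using not_less_Least[of s "\<lambda>t. c \<le> lifted init act t p"] unfolding t0_def by simp
    then show ?thesis using t0 Suc by (auto split: if_splits)
  qed
  then show ?thesis unfolding first_time_def by (rule LeastI)
qed

locale unison_run =
  fixes V :: "'a set" and E :: "'a \<Rightarrow> 'a \<Rightarrow> bool"
    and f :: "'s \<Rightarrow> 's \<Rightarrow> 's" and v0 :: "'a \<Rightarrow> 's"
    and rho M :: int and r :: "nat \<Rightarrow> 'a \<Rightarrow> int" and v1 v2 :: "nat \<Rightarrow> 'a \<Rightarrow> 's"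
    and act :: "nat \<Rightarrow> 'a set" and init :: "'a \<Rightarrow> int"
  assumes graph: "graph_ok V E" and conn: "connected_graph V E"
    and rho: "0 \<le> rho" and M3: "M \<ge> 3" and Mdvd: "(rho + 1) dvd M"
    and semi: "semilattice f"
    and exec: "\<And>t. step M rho V E f v0 (r t) (v1 t) (v2 t) (act t) (r (Suc t)) (v1 (Suc t)) (v2 (Suc t))"
    and init_mod: "\<And>q. q \<in> V \<Longrightarrow> init q mod M = r 0 q"
    and init_edge: "\<And>a b. E a b \<Longrightarrow> \<bar>init b - init a\<bar> \<le> 1"
begin

abbreviation L :: "nat \<Rightarrow> 'a \<Rightarrow> int" where "L \<equiv> lifted init act"

lemma edge_in_V: "E a b \<Longrightarrow> a \<in> V \<and> b \<in> V"
  using graph unfolding graph_ok_def by blast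

(* If the lifting is consistent at a, b at time t, an active a sees b at the same
   lifted clock or one ahead (enabledness). *)
lemma active_nbr_lifted:
  assumes a: "a \<in> act t" and ab: "E a b"
    and ma: "L t a mod M = r t a" and mb: "L t b mod M = r t b" and d: "\<bar>L t b - L t a\<bar> \<le> 1"
  shows "L t b = L t a \<or> L t b = L t a + 1"
proof -
  have "b \<in> nbrs V E a" using ab edge_in_V[OF ab] by (simp add: nbrs_def)
  then have "r t b = r t a \<or> r t b = (r t a + 1) mod M"
    using step_parts(2)[OF exec[of t]] a unfolding enabled_def by blast
  then show ?thesis using consecutive_of_mod[OF M3 d] ma mb by metis
qed

lemma lifting_invariant:
  "(\<forall>q\<in>V. L t q mod M = r t q) \<and> (\<forall>a b. E a b \<longrightarrow> \<bar>L t b - L t a\<bar> \<le> 1)"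
proof (induction t)
  case 0
  then show ?case using init_mod init_edge by simp
next
  case (Suc t)
  then have mod_t: "\<And>q. q \<in> V \<Longrightarrow> L t q mod M = r t q"
    and edge_t: "\<And>a b. E a b \<Longrightarrow> \<bar>L t b - L t a\<bar> \<le> 1" by blast+
  have "L (Suc t) q mod M = r (Suc t) q" if q: "q \<in> V" for q
  proof (cases "q \<in> act t")
    case True
    then have "r (Suc t) q = (L t q mod M + 1) mod M"
      using step_parts(4)[OF exec[of t]] mod_t[OF q] by simp
    then show ?thesis using True by (simp add: mod_add_left_eq)
  next
    case False
    then show ?thesis using step_parts(3)[OF exec[of t]] mod_t[OF q] by simp
  qed
  moreover have "\<bar>L (Suc t) b - L (Suc t) a\<bar> \<le> 1" if ab: "E a b" for a b
  proof -
    have ba: "E b a" using ab graph unfolding graph_ok_def by blast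
    have "a \<in> act t \<Longrightarrow> L t b = L t a \<or> L t b = L t a + 1"
      using active_nbr_lifted[OF _ ab] mod_t edge_t[OF ab] edge_in_V[OF ab] by blast
    moreover have "b \<in> act t \<Longrightarrow> L t a = L t b \<or> L t a = L t b + 1"
      using active_nbr_lifted[OF _ ba] mod_t edge_t[OF ba] edge_in_V[OF ab] by blast
    ultimately show ?thesis using edge_t[OF ab] by auto
  qed
  ultimately show ?case by blast
qed

lemma lifted_mod: "q \<in> V \<Longrightarrow> L t q mod M = r t q"
  using lifting_invariant by blast

lemma lifted_active_nbr: "a \<in> act t \<Longrightarrow> E a b \<Longrightarrow> L t b = L t a \<or> L t b = L t a + 1"
  using active_nbr_lifted lifting_invariant edge_in_V by blast

(* Since rho + 1 divides M, the phase of the clock is the phase of the lifted clock. *)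
lemma clock_phase: "q \<in> V \<Longrightarrow> r t q mod (rho + 1) = L t q mod (rho + 1)"
  using lifted_mod mod_mod_cancel[OF Mdvd] by metis

section \<open>The registers within a phase\<close>

(* W is the start of a phase above all initial lifted clocks; the registers of q are
   correct when its lifted clock is in the window [W, W + rho]. *)
definition registers_ok :: "int \<Rightarrow> nat \<Rightarrow> 'a \<Rightarrow> bool" where
  "registers_ok W t q \<longleftrightarrow> (W \<le> L t q \<and> L t q \<le> W + rho \<longrightarrow>
     v2 t q = ball_join V E f v0 q (nat (L t q - W)) \<and>
     v1 t q = ball_join V E f v0 q (nat (L t q - W) - 1))"

(* Entering the window: the increment from W - 1 resets both registers to v0. *)
lemma registers_reset:
  assumes W: "(rho + 1) dvd W" and q: "q \<in> V" "q \<in> act t" and Lq: "L t q = W - 1"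
  shows "registers_ok W (Suc t) q"
proof -
  have "L t q mod (rho + 1) = (-1) mod (rho + 1)"
    using mod_add_multiple[OF W, of "-1"] Lq by simp
  also have "\<dots> = rho" using rho by (simp add: zmod_minus1)
  finally have "r t q mod (rho + 1) = rho" using clock_phase[OF q(1)] by simp
  then have "v1 (Suc t) q = v0 q \<and> v2 (Suc t) q = v0 q"
    using step_parts(5)[OF exec[of t] q(2)] by blast
  moreover have "L (Suc t) q = W" using q(2) Lq by simp
  ultimately show ?thesis
    unfolding registers_ok_def using ball_join_0[OF semi conn q(1)] by simp
qed

(* Inside the window: v1 takes the old v2, and v2 joins the layer j of the neighbours;
   neighbours at the same lifted clock provide it in v2, those one ahead in v1. *)
lemma registers_accumulate:
  assumes W: "(rho + 1) dvd W" and q: "q \<in> V" "q \<in> act t"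
    and Lq: "L t q = W + int j" and j: "int j < rho"
    and IH: "\<forall>q'\<in>V. registers_ok W t q'"
  shows "registers_ok W (Suc t) q"
proof -
  have "L t q mod (rho + 1) = int j"
    using mod_add_multiple[OF W, of "int j"] Lq j by simp
  then have "r t q mod (rho + 1) \<noteq> rho" using clock_phase[OF q(1)] j by simp
  note upd = step_parts(6)[OF exec[of t] q(2) this]
  have layer: "(\<lambda>q'. if r t q' = r t q then v2 t q' else v1 t q') ` nbrs V E q
      = (\<lambda>q'. ball_join V E f v0 q' j) ` nbrs V E q"
  proof (rule image_cong[OF refl])
    fix q' assume "q' \<in> nbrs V E q"
    then have E: "E q q'" and q': "q' \<in> V" by (auto simp: nbrs_def)
    have "r t q' = L t q' mod M" "r t q = L t q mod M"
      using lifted_mod[OF q'] lifted_mod[OF q(1)] by simp_all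
    then have clocks: "r t q' = r t q \<longleftrightarrow> L t q' = L t q"
      using lifted_active_nbr[OF q(2) E] mod_Suc_neq[OF M3, of "L t q"] by auto
    show "(if r t q' = r t q then v2 t q' else v1 t q') = ball_join V E f v0 q' j"
      using lifted_active_nbr[OF q(2) E] IH q' Lq j unfolding clocks registers_ok_def
      by (auto simp: nat_add_distrib)
  qed
  have "v2 t q = ball_join V E f v0 q j"
    using IH q(1) Lq j unfolding registers_ok_def by simp
  moreover have "v2 (Suc t) q = ball_join V E f v0 q (Suc j)"
    using upd layer ball_join_Suc[OF semi graph conn q(1)] by simp
  moreover have "L (Suc t) q = W + int (Suc j)" using q(2) Lq by simp
  ultimately show ?thesis using upd unfolding registers_ok_def by (simp add: nat_add_distrib)
qed

lemma registers_correct: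
  assumes W: "(rho + 1) dvd W" and above: "\<And>q. q \<in> V \<Longrightarrow> init q < W"
  shows "\<forall>q\<in>V. registers_ok W t q"
proof (induction t)
  case 0
  show ?case
  proof
    fix q assume "q \<in> V"
    then have "init q < W" by (rule above)
    then show "registers_ok W 0 q" by (simp add: registers_ok_def)
  qed
next
  case (Suc t)
  show ?case
  proof
    fix q assume q: "q \<in> V"
    show "registers_ok W (Suc t) q"
    proof (cases "q \<in> act t")
      case False
      then show ?thesis
        using Suc q step_parts(3)[OF exec[of t] False] unfolding registers_ok_def by simp
    next
      case act: True
      consider "L t q = W - 1" | j where "L t q = W + int j" "int j < rho"
        | "L (Suc t) q < W \<or> W + rho < L (Suc t) q"
      proof (cases "W \<le> L t q \<and> L t q < W + rho")
        case True
        then show thesis using that(2)[of "nat (L t q - W)"] by simp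
      next
        case False
        then show thesis using that(1,3) act by fastforce
      qed
      then show ?thesis
      proof cases
        case 1 then show ?thesis using registers_reset[OF W q act] by blast
      next
        case 2 then show ?thesis using registers_accumulate[OF W q act _ _ Suc] by blast
      next
        case 3 then show ?thesis unfolding registers_ok_def by auto
      qed
    qed
  qed
qed

end

theorem mainTheorem5:
  fixes V :: "'a set" and E :: "'a \<Rightarrow> 'a \<Rightarrow> bool"
    and f :: "'s \<Rightarrow> 's \<Rightarrow> 's" and v0 :: "'a \<Rightarrow> 's"
    and r :: "nat \<Rightarrow> 'a \<Rightarrow> int" and v1 v2 :: "nat \<Rightarrow> 'a \<Rightarrow> 's"
    and act :: "nat \<Rightarrow> 'a set"
    and rho M U :: int and k :: nat and p0 p :: 'a
  assumes graph: "graph_ok V E" and conn: "connected_graph V E"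
    and rho: "rho \<ge> 1" and M3: "M \<ge> 3" and Mdvd: "(rho + 1) dvd M"
    and semi: "semilattice f"
    and init_range: "\<forall>q\<in>V. 0 \<le> r 0 q \<and> r 0 q < M"
    and exec: "\<forall>t. step M rho V E f v0 (r t) (v1 t) (v2 t) (act t) (r (Suc t)) (v1 (Suc t)) (v2 (Suc t))"
    and WU0: "WU0 M V E (r 0)"
    and fair: "\<forall>q\<in>V. \<forall>t. \<exists>t'\<ge>t. q \<in> act t'"
    and p0: "p0 \<in> V" "\<forall>q\<in>V. pdelay M V E (r 0) p0 q \<ge> 0"
    and U: "U * (rho + 1) \<ge> r 0 p0 + int (diameter V E) + 1"
    and k: "1 \<le> k" "int k \<le> rho"
    and p: "p \<in> V"
  shows "let init = (\<lambda>q. r 0 p0 + pdelay M V E (r 0) p0 q);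
             T = first_time init act p (U * (rho + 1) + int k)
         in v1 T p = bigop f (v0 ` ball V E p (k - 1)) \<and>
            v2 T p = bigop f (v0 ` ball V E p k)"
proof -
  define init where "init = (\<lambda>q. r 0 p0 + pdelay M V E (r 0) p0 q)"
  define W where "W = U * (rho + 1)"
  define T where "T = first_time init act p (W + int k)"
  have M0: "M > 0" using M3 by simp
  have finV: "finite V" using graph by (simp add: graph_ok_def)
  have WU: "WU M E (r 0)" using WU0 by (simp add: WU0_def)
  have "unison_run V E f v0 rho M r v1 v2 act init"
  proof (rule unison_run.intro)
    show "init q mod M = r 0 q" if q: "q \<in> V" for q
    proof -
      have "init q mod M = (r 0 p0 + pdelay M V E (r 0) p0 q mod M) mod M"
        unfolding init_def by (rule mod_add_right_eq[symmetric])
      also have "\<dots> = (r 0 p0 + (r 0 q - r 0 p0)) mod M"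
        unfolding pdelay_mod[OF conn p0(1) q] by (rule mod_add_right_eq)
      also have "\<dots> = r 0 q" using init_range q by simp
      finally show ?thesis .
    qed
    show "\<bar>init b - init a\<bar> \<le> 1" if ab: "E a b" for a b
    proof -
      have "a \<in> V" "b \<in> V" using ab graph by (auto simp: graph_ok_def)
      then have "init b - init a = ominus M (r 0 b) (r 0 a)"
        using pdelay_edge[OF WU0 conn p0(1) ab] by (simp add: init_def)
      moreover have "loc_comp M (r 0 a) (r 0 b)" using WU ab by (simp add: WU_def)
      ultimately show ?thesis
        using ominus_le_1[OF M0] ominus_ge_minus_1[OF M0] by (simp add: abs_le_iff)
    qed
    show "step M rho V E f v0 (r t) (v1 t) (v2 t) (act t) (r (Suc t)) (v1 (Suc t)) (v2 (Suc t))"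
      for t using exec by blast
  qed (use graph conn rho M3 Mdvd semi in auto)
  then interpret unison_run V E f v0 rho M r v1 v2 act init .
  have above: "init q < W" if q: "q \<in> V" for q
    using pdelay_le_diameter[OF M0 WU0 conn finV p0(1) q] U by (simp add: init_def W_def)
  have fair_p: "\<forall>t. \<exists>t'\<ge>t. p \<in> act t'" using fair p by blast
  have "init p \<le> W + int k" using above[OF p] by simp
  then have LT: "L T p = W + int k" unfolding T_def by (rule lifted_first_time[OF fair_p])
  have "registers_ok W T p" using registers_correct[of W] above p by (simp add: W_def)
  moreover have "W \<le> L T p \<and> L T p \<le> W + rho" "nat (L T p - W) = k"
    using LT k by simp_all
  ultimately have "v1 T p = bigop f (v0 ` ball V E p (k - 1))"
    and "v2 T p = bigop f (v0 ` ball V E p k)"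
    unfolding registers_ok_def ball_join_def by simp_all
  then show ?thesis unfolding Let_def init_def[symmetric] W_def[symmetric] T_def[symmetric]
    by blast
qed

end
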